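(* Let $p=p_1*p_2\in\mathfrak P_2(I)$ with $p_1,p_2$ probability densities of Fisher information at most $I$, and let $p''(x)=\int_{-\infty}^{+\infty}p_1'(y)p_2'(x-y)\,dy$ (defined for every $x$; it is a Radon–Nikodym derivative of $p'$). Then for all $x$: $p(x)=0$ implies $p''(x)=0$, and $|p''(x)|\le I^{3/2}$. Moreover, $$\int_{\{p(x)>0\}}\frac{p''(x)^2}{p(x)}\,dx\le I^2.$$
   Context: $\mathfrak P_k(I)$ denotes the class of functions on $\mathbb R$ representable as a convolution of $k$ probability densities each with Fisher information at most $I$, the Fisher information of a density $q$ being $\int_{\{q>0\}}q'^2/q\,dx$ if $q$ is absolutely continuous and $+\infty$ otherwise. *)

theory Defs
  imports "HOL-Analysis.Analysis"
begin

definition prob_density :: "(real \<Rightarrow> real) \<Rightarrow> bool" where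
  "prob_density q \<longleftrightarrow> (\<forall>x. 0 \<le> q x) \<and> integrable lborel q \<and> (LINT x|lborel. q x) = 1"

text \<open>q is (locally) absolutely continuous with (Radon--Nikodym / a.e.) derivative d:
  d is locally integrable and q is the indefinite integral of d on every compact interval.\<close>
definition ac_deriv :: "(real \<Rightarrow> real) \<Rightarrow> (real \<Rightarrow> real) \<Rightarrow> bool" where
  "ac_deriv q d \<longleftrightarrow> d \<in> borel_measurable lborel \<and>
     (\<forall>a b. a \<le> b \<longrightarrow> set_integrable lborel {a..b} d \<and>
        q b - q a = (LINT x:{a..b}|lborel. d x))"

definition abs_cont :: "(real \<Rightarrow> real) \<Rightarrow> bool" where
  "abs_cont q \<longleftrightarrow> (\<exists>d. ac_deriv q d)"

text \<open>Fisher information: \<open>\<integral>_{q>0} q'^2/q\<close> if q is absolutely continuous, \<open>\<infinity>\<close> otherwise.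
  The value does not depend on the choice of the a.e. derivative.\<close>
definition fisher_info :: "(real \<Rightarrow> real) \<Rightarrow> ennreal" where
  "fisher_info q = (if abs_cont q then
      (\<integral>\<^sup>+ x. indicator {y. q y > 0} x * ennreal ((SOME d. ac_deriv q d) x ^ 2 / q x) \<partial>lborel)
    else \<infinity>)"

definition conv :: "(real \<Rightarrow> real) \<Rightarrow> (real \<Rightarrow> real) \<Rightarrow> real \<Rightarrow> real" where
  "conv f g x = (LINT y|lborel. f y * g (x - y))"

end

theory Submission
  imports Defs "HOL-Real_Asymp.Real_Asymp"
begin

text \<open>
  Let \<open>p = p\<^sub>1 * p\<^sub>2\<close> with \<open>p\<^sub>i\<close> probability densities of Fisher information at most \<open>I\<close>
  and derivatives \<open>d\<^sub>i\<close>, and put \<open>w\<^sub>i = d\<^sub>i\<^sup>2 / p\<^sub>i\<close> (zero where \<open>p\<^sub>i = 0\<close>).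
  The whole proof rests on the almost-everywhere factorisation \<open>d\<^sub>i\<^sup>2 = w\<^sub>i p\<^sub>i\<close>, i.e. on
  the fact that \<open>d\<^sub>i = 0\<close> almost everywhere on \<open>{p\<^sub>i = 0}\<close>. We prove this via a chain rule
  for absolutely continuous functions (established by a uniform-subdivision argument) applied
  to \<open>arctan (n q) / n\<close>, together with a uniqueness lemma for functions whose interval integrals
  all vanish; the same uniqueness lemma shows that the Fisher information does not depend on
  the chosen derivative. Next, \<open>p\<^sub>i(x)\<^sup>2 \<le> (\<integral>|d\<^sub>i|)\<^sup>2 \<le> (\<integral>w\<^sub>i)(\<integral>p\<^sub>i) \<le> I\<close>.
  The convolution estimates are then two applications of Cauchy--Schwarz to
  \<open>|d\<^sub>1(y) d\<^sub>2(x-y)| = \<surd>(w\<^sub>1(y) p\<^sub>2(x-y)) \<surd>(p\<^sub>1(y) w\<^sub>2(x-y)) = \<surd>(p\<^sub>1(y) p\<^sub>2(x-y)) \<surd>(w\<^sub>1(y) w\<^sub>2(x-y))\<close>: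
  the first grouping gives \<open>|p''| \<le> I\<^sup>3\<^sup>/\<^sup>2\<close> and integrability, the second gives
  \<open>p''(x)\<^sup>2 \<le> p(x) (w\<^sub>1 * w\<^sub>2)(x)\<close>, whence \<open>p'' = 0\<close> where \<open>p = 0\<close>, and integrating with
  Tonelli gives \<open>\<integral>{p > 0} p''\<^sup>2/p \<le> (\<integral>w\<^sub>1)(\<integral>w\<^sub>2) \<le> I\<^sup>2\<close>.
\<close>

lemma ac_deriv_henstock:
  assumes "ac_deriv q d" "a \<le> b"
  shows "d absolutely_integrable_on {a..b}" "q b - q a = integral {a..b} d"
proof -
  have d: "d \<in> borel_measurable lborel" and si: "set_integrable lborel {a..b} d"
     and eq: "q b - q a = (LINT x:{a..b}|lborel. d x)"
    using assms unfolding ac_deriv_def by auto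
  have "set_integrable lebesgue {a..b} d"
    using si d unfolding set_integrable_def
    by (subst integrable_completion[of _ lborel]) auto
  then show "d absolutely_integrable_on {a..b}" by simp
  show "q b - q a = integral {a..b} d"
    using eq set_borel_integral_eq_integral(2)[OF si] by simp
qed

lemma ac_deriv_set_integrable:
  assumes "ac_deriv q d"
  shows "set_integrable lborel {a..b} d"
  using assms by (cases "a \<le> b") (auto simp: ac_deriv_def set_integrable_def)

lemma ac_deriv_continuous:
  assumes "ac_deriv q d"
  shows "continuous_on UNIV q"
proof -
  have "isCont q x" for x
  proof -
    have int: "d integrable_on {x-1..x+1}"
      using ac_deriv_henstock(1)[OF assms, of "x-1" "x+1"]
      by (simp add: absolutely_integrable_on_def)
    have "continuous_on {x-1..x+1} (\<lambda>y. q (x-1) + integral {x-1..y} d)"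
      by (intro continuous_intros indefinite_integral_continuous_1[OF int])
    moreover have "q (x-1) + integral {x-1..y} d = q y" if "y \<in> {x-1..x+1}" for y
      using ac_deriv_henstock(2)[OF assms, of "x-1" y] that by auto
    ultimately have "continuous_on {x-1..x+1} q"
      by (rule continuous_on_eq)
    then show ?thesis
      by (rule continuous_on_interior) (simp add: interior_atLeastAtMost_real)
  qed
  then show ?thesis by (simp add: continuous_at_imp_continuous_on)
qed

lemma ac_deriv_measurable:
  assumes "ac_deriv q d"
  shows "q \<in> borel_measurable borel" "d \<in> borel_measurable borel"
  using borel_measurable_continuous_onI[OF ac_deriv_continuous[OF assms]] assms
  by (auto simp: ac_deriv_def)

lemma continuous_times_absolutely_integrable:
  fixes c d :: "real \<Rightarrow> real"
  assumes c: "continuous_on {a..b} c" and d: "d absolutely_integrable_on {a..b}"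
  shows "(\<lambda>x. c x * d x) absolutely_integrable_on {a..b}"
proof (rule absolutely_integrable_bounded_measurable_product_real)
  show "c \<in> borel_measurable (lebesgue_on {a..b})"
    using c by (intro continuous_imp_measurable_on_sets_lebesgue) auto
  show "bounded (c ` {a..b})"
    using c by (intro compact_imp_bounded compact_continuous_image) auto
qed (use d in auto)

lemma mvt_composition:
  fixes q Phi phi :: "real \<Rightarrow> real"
  assumes q: "continuous_on UNIV q"
    and Phi: "\<And>u. (Phi has_real_derivative phi u) (at u)"
    and uv: "u \<le> v"
  shows "\<exists>w\<in>{u..v}. Phi (q v) - Phi (q u) = phi (q w) * (q v - q u)"
proof -
  have qc: "continuous_on {u..v} q" using q by (rule continuous_on_subset) auto
  consider "q u = q v" | "q u < q v" | "q v < q u" by linarith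
  then show ?thesis
  proof cases
    case 1 then show ?thesis using uv by (intro bexI[of _ u]) auto
  next
    case 2
    obtain z where z: "q u < z" "z < q v" "Phi (q v) - Phi (q u) = (q v - q u) * phi z"
      using MVT2[OF 2, of Phi phi] Phi by blast
    obtain w where w: "u \<le> w" "w \<le> v" "q w = z"
      using IVT'[of q u z v, OF _ _ uv qc] z by auto
    show ?thesis using w z by (intro bexI[of _ w]) auto
  next
    case 3
    obtain z where z: "q v < z" "z < q u" "Phi (q u) - Phi (q v) = (q u - q v) * phi z"
      using MVT2[OF 3, of Phi phi] Phi by blast
    obtain w where w: "u \<le> w" "w \<le> v" "q w = z"
      using IVT2'[of q v z u, OF _ _ uv qc] z by auto
    show ?thesis using w z by (intro bexI[of _ w]) (auto simp: algebra_simps)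
  qed
qed

lemma subdivision_bound:
  fixes F G :: "real \<Rightarrow> real"
  assumes st: "s \<le> t" and \<delta>: "\<delta> > 0"
    and local: "\<And>u v. s \<le> u \<Longrightarrow> u \<le> v \<Longrightarrow> v \<le> t \<Longrightarrow> v - u < \<delta> \<Longrightarrow> \<bar>F v - F u\<bar> \<le> G v - G u"
  shows "\<bar>F t - F s\<bar> \<le> G t - G s"
proof -
  obtain N :: nat where N: "(t - s) / \<delta> < real N" using reals_Archimedean2 by blast
  have Npos: "N > 0" using N st \<delta> by (cases "N = 0") (auto simp: field_simps)
  define h where "h = (t - s) / N"
  define x where "x k = s + real k * h" for k
  have h0: "h \<ge> 0" and h\<delta>: "h < \<delta>" using st Npos N \<delta> by (auto simp: h_def field_simps)
  have "\<bar>F (x k) - F s\<bar> \<le> G (x k) - G s" if "k \<le> N" for k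
    using that
  proof (induction k)
    case 0 then show ?case by (simp add: x_def)
  next
    case (Suc k)
    have "x (Suc k) \<le> x N" using Suc.prems h0 by (auto simp: x_def intro: mult_right_mono)
    also have "x N = t" using Npos by (simp add: x_def h_def)
    finally have step: "\<bar>F (x (Suc k)) - F (x k)\<bar> \<le> G (x (Suc k)) - G (x k)"
      using local[of "x k" "x (Suc k)"] Suc.prems h0 h\<delta> st
      by (auto simp: x_def algebra_simps intro: order_trans[OF _ mult_right_mono[OF _ h0]])
    show ?case using step Suc by linarith
  qed
  from this[of N] show ?thesis using Npos by (simp add: x_def h_def)
qed

lemma chain_rule_local_error:
  fixes q d Phi phi :: "real \<Rightarrow> real"
  assumes ac: "ac_deriv q d"
    and Phi: "\<And>u. (Phi has_real_derivative phi u) (at u)"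
    and phi: "continuous_on UNIV phi"
    and uv: "u \<le> v"
    and osc: "\<And>w x. w \<in> {u..v} \<Longrightarrow> x \<in> {u..v} \<Longrightarrow> \<bar>phi (q w) - phi (q x)\<bar> \<le> e"
  shows "\<bar>Phi (q v) - Phi (q u) - integral {u..v} (\<lambda>x. phi (q x) * d x)\<bar>
           \<le> e * integral {u..v} (\<lambda>x. \<bar>d x\<bar>)"
proof -
  have q: "continuous_on UNIV q" by (rule ac_deriv_continuous[OF ac])
  have dabs: "d absolutely_integrable_on {u..v}" by (rule ac_deriv_henstock(1)[OF ac uv])
  then have dint: "d integrable_on {u..v}" "(\<lambda>x. \<bar>d x\<bar>) integrable_on {u..v}"
    by (auto simp: absolutely_integrable_on_def)
  have gint: "(\<lambda>x. phi (q x) * d x) integrable_on {u..v}"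
    using continuous_times_absolutely_integrable[OF _ dabs, of "\<lambda>x. phi (q x)"]
      continuous_on_compose2[OF phi q]
    by (auto simp: absolutely_integrable_on_def intro: continuous_on_subset)
  obtain w where w: "w \<in> {u..v}" and wq: "Phi (q v) - Phi (q u) = phi (q w) * (q v - q u)"
    using mvt_composition[OF q Phi uv] by blast
  have "Phi (q v) - Phi (q u) = integral {u..v} (\<lambda>x. phi (q w) * d x)"
    using wq ac_deriv_henstock(2)[OF ac uv] by simp
  moreover have "integral {u..v} (\<lambda>x. (phi (q w) - phi (q x)) * d x)
      = integral {u..v} (\<lambda>x. phi (q w) * d x) - integral {u..v} (\<lambda>x. phi (q x) * d x)"
    unfolding left_diff_distrib by (rule integral_diff[OF integrable_on_mult_right[OF dint(1)] gint])
  ultimately have eq: "Phi (q v) - Phi (q u) - integral {u..v} (\<lambda>x. phi (q x) * d x)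
      = integral {u..v} (\<lambda>x. (phi (q w) - phi (q x)) * d x)"
    by simp
  have "norm (integral {u..v} (\<lambda>x. (phi (q w) - phi (q x)) * d x))
      \<le> integral {u..v} (\<lambda>x. e * \<bar>d x\<bar>)"
  proof (rule integral_norm_bound_integral)
    show "(\<lambda>x. (phi (q w) - phi (q x)) * d x) integrable_on {u..v}"
      unfolding left_diff_distrib by (rule integrable_diff[OF integrable_on_mult_right[OF dint(1)] gint])
    show "(\<lambda>x. e * \<bar>d x\<bar>) integrable_on {u..v}"
      using dint(2) by (rule integrable_on_mult_right)
    show "norm ((phi (q w) - phi (q x)) * d x) \<le> e * \<bar>d x\<bar>" if "x \<in> {u..v}" for x
      using osc[OF w that] by (simp add: abs_mult mult_right_mono)
  qed
  then show ?thesis using eq by simp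
qed

lemma zero_if_abs_le_all_multiples:
  fixes z G :: real
  assumes G: "G \<ge> 0" and small: "\<And>e. e > 0 \<Longrightarrow> \<bar>z\<bar> \<le> e * G"
  shows "z = 0"
proof -
  have "\<bar>z\<bar> \<le> 0 + e" if "e > 0" for e
  proof (cases "G = 0")
    case True then show ?thesis using small[of 1] that by simp
  next
    case False then show ?thesis using small[of "e / G"] G that by simp
  qed
  then show ?thesis using field_le_epsilon[of "\<bar>z\<bar>" 0] by simp
qed

lemma chain_rule_ac:
  fixes q d Phi phi :: "real \<Rightarrow> real"
  assumes ac: "ac_deriv q d"
    and Phi: "\<And>u. (Phi has_real_derivative phi u) (at u)"
    and phi: "continuous_on UNIV phi"
    and st: "s \<le> t"
  shows "Phi (q t) - Phi (q s) = integral {s..t} (\<lambda>x. phi (q x) * d x)"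
proof -
  define g where "g x = phi (q x) * d x" for x
  define F where "F u = Phi (q u) - integral {s..u} g" for u
  define G where "G u = integral {s..u} (\<lambda>x. \<bar>d x\<bar>)" for u
  have pq: "continuous_on UNIV (\<lambda>x. phi (q x))"
    using continuous_on_compose2[OF phi ac_deriv_continuous[OF ac]] by auto
  have int: "g integrable_on {a..b}" "(\<lambda>x. \<bar>d x\<bar>) integrable_on {a..b}" if "a \<le> b" for a b
  proof -
    have "continuous_on {a..b} (\<lambda>x. phi (q x))" using pq by (rule continuous_on_subset) simp
    from continuous_times_absolutely_integrable[OF this ac_deriv_henstock(1)[OF ac that]]
    show "g integrable_on {a..b}" by (simp add: g_def[abs_def] absolutely_integrable_on_def)
    show "(\<lambda>x. \<bar>d x\<bar>) integrable_on {a..b}"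
      using ac_deriv_henstock(1)[OF ac that] by (simp add: absolutely_integrable_on_def)
  qed
  have G0: "G t \<ge> 0" unfolding G_def using int(2)[OF st] by (intro integral_nonneg) auto
  have small: "\<bar>F t - F s\<bar> \<le> e * G t" if e: "e > 0" for e
  proof -
    obtain \<delta> where \<delta>: "\<delta> > 0" and \<delta>u: "\<And>x y. x \<in> {s..t} \<Longrightarrow> y \<in> {s..t} \<Longrightarrow> dist y x < \<delta>
        \<Longrightarrow> dist (phi (q y)) (phi (q x)) < e"
      using compact_uniformly_continuous[OF continuous_on_subset[OF pq] compact_Icc] e
      unfolding uniformly_continuous_on_def by (metis subset_UNIV)
    have "\<bar>F t - F s\<bar> \<le> e * G t - e * G s"
    proof (rule subdivision_bound[OF st \<delta>])
      fix u v assume uv: "s \<le> u" "u \<le> v" "v \<le> t" "v - u < \<delta>"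
      have "integral {s..u} g + integral {u..v} g = integral {s..v} g"
        "G u + integral {u..v} (\<lambda>x. \<bar>d x\<bar>) = G v"
        using Henstock_Kurzweil_Integration.integral_combine[of s u v] int[of s v] uv
        by (simp_all add: G_def)
      then have "F v - F u = Phi (q v) - Phi (q u) - integral {u..v} g"
        "G v - G u = integral {u..v} (\<lambda>x. \<bar>d x\<bar>)"
        by (simp_all add: F_def)
      moreover have "\<bar>phi (q w) - phi (q x)\<bar> \<le> e" if "w \<in> {u..v}" "x \<in> {u..v}" for w x
      proof -
        have "\<bar>w - x\<bar> < \<delta>" using that uv by auto
        then show ?thesis using \<delta>u[of x w] that uv by (auto simp: dist_real_def)
      qed
      ultimately show "\<bar>F v - F u\<bar> \<le> e * G v - e * G u"
        using chain_rule_local_error[OF ac Phi phi \<open>u \<le> v\<close>, of e]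
        unfolding right_diff_distrib[symmetric] by (simp add: g_def[abs_def])
    qed
    then show ?thesis by (simp add: G_def)
  qed
  have "F t - F s = 0" by (rule zero_if_abs_le_all_multiples[OF G0 small])
  then show ?thesis by (simp add: F_def g_def[abs_def])
qed

text \<open>An integrable function whose integrals over all rays \<open>(a, \<infinity>)\<close> vanish is zero almost
  everywhere: its positive and negative parts define the same measure.\<close>

lemma ae_zero_if_ray_integrals_vanish:
  fixes g :: "real \<Rightarrow> real"
  assumes g: "integrable lborel g"
    and z: "\<And>a. (LINT x|lborel. indicator {a<..} x * g x) = 0"
  shows "AE x in lborel. g x = 0"
proof -
  have gm[measurable]: "g \<in> borel_measurable borel" using g by auto
  let ?M = "density lborel (\<lambda>x. ennreal (g x))"
  let ?N = "density lborel (\<lambda>x. ennreal (- g x))"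
  have eq: "emeasure ?M {a<..} = emeasure ?N {a<..}" for a
  proof -
    define h where "h x = indicator {a<..} x * g x" for x
    have hi: "integrable lborel h" unfolding h_def
      using integrable_mult_indicator[of "{a<..}" lborel g] g by simp
    have hp: "integrable lborel (\<lambda>x. max 0 (h x))" "integrable lborel (\<lambda>x. max 0 (- h x))"
      using hi by auto
    have "(LINT x|lborel. h x) = (LINT x|lborel. max 0 (h x) - max 0 (- h x))"
      by (intro Bochner_Integration.integral_cong) (auto simp: max_def)
    then have "(LINT x|lborel. max 0 (h x)) = (LINT x|lborel. max 0 (- h x))"
      using hp z[of a] by (simp add: h_def Bochner_Integration.integral_diff)
    then have "(\<integral>\<^sup>+x. ennreal (max 0 (h x)) \<partial>lborel) = (\<integral>\<^sup>+x. ennreal (max 0 (- h x)) \<partial>lborel)"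
      using hp by (simp add: nn_integral_eq_integral)
    then have "(\<integral>\<^sup>+x. ennreal (h x) \<partial>lborel) = (\<integral>\<^sup>+x. ennreal (- h x) \<partial>lborel)"
      by (simp add: ennreal_max_0)
    moreover have "(\<integral>\<^sup>+x. ennreal (h x) \<partial>lborel) = (\<integral>\<^sup>+x. ennreal (g x) * indicator {a<..} x \<partial>lborel)"
      "(\<integral>\<^sup>+x. ennreal (- h x) \<partial>lborel) = (\<integral>\<^sup>+x. ennreal (- g x) * indicator {a<..} x \<partial>lborel)"
      by (auto intro!: nn_integral_cong simp: h_def indicator_def)
    ultimately show ?thesis by (simp add: emeasure_density)
  qed
  have fin: "emeasure ?M {a<..} < \<infinity>" for a
  proof -
    have "emeasure ?M {a<..} = (\<integral>\<^sup>+x. ennreal (g x) * indicator {a<..} x \<partial>lborel)"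
      by (simp add: emeasure_density)
    also have "\<dots> \<le> (\<integral>\<^sup>+x. ennreal (norm (g x)) \<partial>lborel)"
      by (intro nn_integral_mono) (auto simp: indicator_def)
    also have "\<dots> < \<infinity>" using g by (simp add: integrable_iff_bounded)
    finally show ?thesis .
  qed
  have "?M = ?N"
    by (rule measure_eqI_lessThan) (use eq fin in auto)
  then have "AE x in lborel. ennreal (g x) = ennreal (- g x)"
    by (intro sigma_finite_measure.density_unique[OF sigma_finite_lborel]) auto
  then show ?thesis
  proof (rule AE_mp, intro AE_I2 impI)
    fix x assume "ennreal (g x) = ennreal (- g x)"
    then show "g x = 0"
      by (cases "g x > 0"; cases "g x < 0") (auto simp: ennreal_neg)
  qed
qed

text \<open>A locally integrable function whose integrals over all compact intervals vanish is zero
  almost everywhere (apply the previous lemma to its restrictions to \<open>[-n, n]\<close>).\<close>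

lemma ae_zero_if_interval_integrals_vanish:
  fixes f :: "real \<Rightarrow> real"
  assumes f[measurable]: "f \<in> borel_measurable borel"
    and si: "\<And>a b. set_integrable lborel {a..b} f"
    and z: "\<And>a b. a \<le> b \<Longrightarrow> (LINT x:{a..b}|lborel. f x) = 0"
  shows "AE x in lborel. f x = 0"
proof -
  have n: "AE x in lborel. indicator {- real n..real n} x * f x = 0" for n :: nat
  proof (rule ae_zero_if_ray_integrals_vanish)
    show "integrable lborel (\<lambda>x. indicator {- real n..real n} x * f x)"
      using si[of "- real n" "real n"] by (simp add: set_integrable_def)
    fix a :: real
    have "AE x in lborel. indicator {a<..} x * (indicator {- real n..real n} x * f x)
       = indicator {max a (- real n)..real n} x * f x"
      using AE_lborel_singleton[of a] by eventually_elim (auto simp: indicator_def)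
    then have "(LINT x|lborel. indicator {a<..} x * (indicator {- real n..real n} x * f x))
        = (LINT x|lborel. indicator {max a (- real n)..real n} x * f x)"
      by (rule integral_cong_AE[rotated 2]) auto
    also have "\<dots> = 0"
      using z[of "max a (- real n)" "real n"] by (cases "max a (- real n) \<le> real n")
        (auto simp: set_lebesgue_integral_def)
    finally show "(LINT x|lborel. indicator {a<..} x * (indicator {- real n..real n} x * f x)) = 0" .
  qed
  have "AE x in lborel. \<forall>n::nat. indicator {- real n..real n} x * f x = 0"
    unfolding AE_all_countable using n by blast
  then show ?thesis
  proof (rule AE_mp, intro AE_I2 impI)
    fix x assume H: "\<forall>n::nat. indicator {- real n..real n} x * f x = 0"
    obtain n :: nat where "\<bar>x\<bar> \<le> real n" using real_arch_simple by blast
    then show "f x = 0" using H[rule_format, of n] by (auto simp: indicator_def split: if_splits)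
  qed
qed

lemma ac_deriv_ae_unique:
  assumes d: "ac_deriv q d" and e: "ac_deriv q e"
  shows "AE x in lborel. e x = d x"
proof -
  note [measurable] = ac_deriv_measurable[OF d] ac_deriv_measurable[OF e]
  have "AE x in lborel. e x - d x = 0"
  proof (rule ae_zero_if_interval_integrals_vanish)
    show "set_integrable lborel {a..b} (\<lambda>x. e x - d x)" for a b
      using ac_deriv_set_integrable[OF d] ac_deriv_set_integrable[OF e] by auto
    show "(LINT x:{a..b}|lborel. e x - d x) = 0" if "a \<le> b" for a b
      using ac_deriv_set_integrable[OF d] ac_deriv_set_integrable[OF e] d e that
      by (simp add: ac_deriv_def)
  qed auto
  then show ?thesis by auto
qed

text \<open>The functions \<open>\<Phi>\<^sub>c(u) = arctan (c u) / c\<close> are uniformly small, while their derivatives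
  \<open>1 / (1 + (c u)\<^sup>2)\<close> converge to the indicator of \<open>{0}\<close> as \<open>c \<rightarrow> \<infinity>\<close>.\<close>

lemma arctan_scaled_deriv:
  fixes c u :: real
  assumes "c > 0"
  shows "((\<lambda>u. arctan (c * u) / c) has_real_derivative inverse (1 + (c * u)\<^sup>2)) (at u)"
proof -
  have "((\<lambda>u. arctan (c * u)) has_real_derivative inverse (1 + (c * u)\<^sup>2) * (c * 1)) (at u)"
    by (rule DERIV_chain2[OF DERIV_arctan]) (auto intro!: derivative_eq_intros)
  from DERIV_cdivide[OF this, of c] show ?thesis using assms by simp
qed

lemma arctan_scaled_bound:
  fixes c u :: real
  assumes "c > 0"
  shows "\<bar>arctan (c * u) / c\<bar> \<le> pi / (2 * c)"
proof -
  have "\<bar>arctan (c * u)\<bar> \<le> pi / 2" using arctan_bounded[of "c * u"] by auto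
  from divide_right_mono[OF this, of c] show ?thesis using assms by (simp add: abs_divide)
qed

lemma inverse_one_plus_sq_limit:
  fixes c :: real
  assumes "c \<noteq> 0"
  shows "(\<lambda>n. inverse (1 + (real (Suc n) * c)\<^sup>2)) \<longlonglongrightarrow> 0"
proof -
  have "c\<^sup>2 > 0" using assms by simp
  then have "(\<lambda>n. inverse (1 + real (Suc n) ^ 2 * c\<^sup>2)) \<longlonglongrightarrow> 0"
    by real_asymp
  then show ?thesis by (simp add: power_mult_distrib)
qed

lemma arctan_scaled_increment_limit:
  fixes u v :: real
  shows "(\<lambda>n. arctan (real (Suc n) * u) / real (Suc n) - arctan (real (Suc n) * v) / real (Suc n))
           \<longlonglongrightarrow> 0"
proof (rule Lim_null_comparison)
  let ?c = "\<lambda>n. real (Suc n)"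
  have "norm (arctan (?c n * u) / ?c n - arctan (?c n * v) / ?c n)
      \<le> \<bar>arctan (?c n * u) / ?c n\<bar> + \<bar>arctan (?c n * v) / ?c n\<bar>" for n
    unfolding real_norm_def by (rule abs_triangle_ineq4)
  also have "\<dots> n \<le> pi / (2 * ?c n) + pi / (2 * ?c n)" for n
    by (intro add_mono arctan_scaled_bound) auto
  also have "\<dots> n = pi / ?c n" for n by (simp add: divide_simps)
  finally show "\<forall>\<^sub>F n in sequentially. norm (arctan (?c n * u) / ?c n - arctan (?c n * v) / ?c n)
      \<le> pi / ?c n"
    by simp
  show "(\<lambda>n. pi / ?c n) \<longlonglongrightarrow> 0" by real_asymp
qed

lemma cutoff_integral_limit:
  fixes q d :: "real \<Rightarrow> real"
  assumes ac: "ac_deriv q d"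
  shows "(\<lambda>n. LINT x:{a..b}|lborel. inverse (1 + (real (Suc n) * q x)\<^sup>2) * d x)
           \<longlonglongrightarrow> (LINT x:{a..b}|lborel. indicator {x. q x = 0} x * d x)"
proof -
  note [measurable] = ac_deriv_measurable[OF ac]
  show ?thesis
    unfolding set_lebesgue_integral_def
  proof (rule integral_dominated_convergence[where w = "\<lambda>x. indicator {a..b} x * \<bar>d x\<bar>"])
  show "integrable lborel (\<lambda>x. indicator {a..b} x * \<bar>d x\<bar>)"
    using integrable_abs[OF ac_deriv_set_integrable[OF ac, of a b, unfolded set_integrable_def]]
    by (simp add: abs_mult)
  show "AE x in lborel. (\<lambda>n. indicator {a..b} x *\<^sub>R (inverse (1 + (real (Suc n) * q x)\<^sup>2) * d x))
      \<longlonglongrightarrow> indicator {a..b} x *\<^sub>R (indicator {x. q x = 0} x * d x)"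
  proof (intro AE_I2)
    fix x
    have "(\<lambda>n. inverse (1 + (real (Suc n) * q x)\<^sup>2)) \<longlonglongrightarrow> indicator {x. q x = 0} x"
      using inverse_one_plus_sq_limit[of "q x"] by (cases "q x = 0") simp_all
    then show "(\<lambda>n. indicator {a..b} x *\<^sub>R (inverse (1 + (real (Suc n) * q x)\<^sup>2) * d x))
        \<longlonglongrightarrow> indicator {a..b} x *\<^sub>R (indicator {x. q x = 0} x * d x)"
      by (auto intro!: tendsto_intros)
  qed
  show "AE x in lborel. norm (indicator {a..b} x *\<^sub>R (inverse (1 + (real (Suc n) * q x)\<^sup>2) * d x))
      \<le> indicator {a..b} x * \<bar>d x\<bar>" for n
    by (intro AE_I2) (auto simp: indicator_def abs_mult inverse_le_1_iff intro!: mult_left_le_one_le)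
  qed measurable
qed

text \<open>The derivative of an absolutely continuous function integrates to zero over its zero set:
  by the chain rule \<open>\<integral>\<^sub>a\<^sup>b q' / (1 + (n q)\<^sup>2) = \<Phi>\<^sub>n(q b) - \<Phi>\<^sub>n(q a)\<close>, and the two sides
  converge to \<open>\<integral>\<^sub>a\<^sup>b q' \<cdot> 1{q = 0}\<close> and to \<open>0\<close>, respectively.\<close>

lemma deriv_integral_on_zero_set:
  fixes q d :: "real \<Rightarrow> real"
  assumes ac: "ac_deriv q d" and ab: "a \<le> b"
  shows "(LINT x:{a..b}|lborel. indicator {x. q x = 0} x * d x) = 0"
proof -
  note [measurable] = ac_deriv_measurable[OF ac]
  let ?c = "\<lambda>n. real (Suc n)"
  have chain: "arctan (?c n * q b) / ?c n - arctan (?c n * q a) / ?c n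
      = (LINT x:{a..b}|lborel. inverse (1 + (?c n * q x)\<^sup>2) * d x)" for n
  proof -
    have si: "set_integrable lborel {a..b} (\<lambda>x. inverse (1 + (?c n * q x)\<^sup>2) * d x)"
      using ac_deriv_set_integrable[OF ac, of a b] unfolding set_integrable_def
      by (rule Bochner_Integration.integrable_bound)
        (auto simp: indicator_def abs_mult inverse_le_1_iff intro!: mult_left_le_one_le)
    have c0: "?c n > 0" by simp
    have "continuous_on UNIV (\<lambda>u. inverse (1 + (?c n * u)\<^sup>2))"
      by (intro continuous_intros) (metis add_pos_nonneg zero_less_one zero_le_power2 less_irrefl)
    from chain_rule_ac[OF ac arctan_scaled_deriv[OF c0] this ab]
    show ?thesis using set_borel_integral_eq_integral(2)[OF si] by simp
  qed
  have "(\<lambda>n. LINT x:{a..b}|lborel. inverse (1 + (?c n * q x)\<^sup>2) * d x) \<longlonglongrightarrow> 0"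
    using arctan_scaled_increment_limit[of "q b" "q a"] by (simp only: chain)
  from LIMSEQ_unique[OF cutoff_integral_limit[OF ac] this] show ?thesis .
qed

lemma deriv_vanishes_on_zero_set:
  fixes q d :: "real \<Rightarrow> real"
  assumes ac: "ac_deriv q d"
  shows "AE x in lborel. q x = 0 \<longrightarrow> d x = 0"
proof -
  note [measurable] = ac_deriv_measurable[OF ac]
  have "AE x in lborel. indicator {x. q x = 0} x * d x = 0"
  proof (rule ae_zero_if_interval_integrals_vanish)
    show "set_integrable lborel {a..b} (\<lambda>x. indicator {x. q x = 0} x * d x)" for a b
      using ac_deriv_set_integrable[OF ac, of a b] unfolding set_integrable_def
      by (rule Bochner_Integration.integrable_bound) (auto simp: indicator_def)
  qed (use deriv_integral_on_zero_set[OF ac] in auto)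
  then show ?thesis by (rule AE_mp) (auto simp: indicator_def)
qed

definition fisher_weight :: "(real \<Rightarrow> real) \<Rightarrow> (real \<Rightarrow> real) \<Rightarrow> real \<Rightarrow> real" where
  "fisher_weight q d x = (if q x > 0 then (d x)\<^sup>2 / q x else 0)"

lemma fisher_weight_nonneg: "0 \<le> fisher_weight q d x"
  by (simp add: fisher_weight_def)

lemma fisher_weight_measurable[measurable]:
  assumes [measurable]: "q \<in> borel_measurable borel" "d \<in> borel_measurable borel"
  shows "fisher_weight q d \<in> borel_measurable borel"
  unfolding fisher_weight_def[abs_def] by measurable

lemma fisher_info_eq_weight:
  assumes ac: "ac_deriv q d"
  shows "fisher_info q = (\<integral>\<^sup>+x. ennreal (fisher_weight q d x) \<partial>lborel)"
proof -
  have abs: "abs_cont q" using ac by (auto simp: abs_cont_def)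
  define e where "e = (SOME d. ac_deriv q d)"
  have "ac_deriv q e" unfolding e_def using abs unfolding abs_cont_def by (rule someI_ex)
  then have "AE x in lborel. e x = d x" by (rule ac_deriv_ae_unique[OF ac])
  then have "(\<integral>\<^sup>+ x. indicator {y. q y > 0} x * ennreal (e x ^ 2 / q x) \<partial>lborel)
      = (\<integral>\<^sup>+x. ennreal (fisher_weight q d x) \<partial>lborel)"
    by (intro nn_integral_cong_AE) (auto simp: fisher_weight_def indicator_def)
  then show ?thesis using abs by (simp add: fisher_info_def e_def)
qed

text \<open>Since \<open>q' = 0\<close> almost everywhere on \<open>{q = 0}\<close>, the identity \<open>q'\<^sup>2 = (q'\<^sup>2/q) \<cdot> q\<close>
  holds almost everywhere.\<close>

lemma deriv_sq_eq_weight: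
  assumes ac: "ac_deriv q d" and nonneg: "\<And>x. 0 \<le> q x"
  shows "AE x in lborel. (d x)\<^sup>2 = fisher_weight q d x * q x"
  using deriv_vanishes_on_zero_set[OF ac]
  by (rule AE_mp) (auto simp: fisher_weight_def order_less_le nonneg intro!: AE_I2)

lemma nn_integral_abs_Cauchy_Schwarz:
  fixes f g h :: "'a \<Rightarrow> real"
  assumes [measurable]: "g \<in> borel_measurable M" "h \<in> borel_measurable M"
    and nonneg: "\<And>x. 0 \<le> g x" "\<And>x. 0 \<le> h x"
    and factor: "AE x in M. (f x)\<^sup>2 = g x * h x"
  shows "(\<integral>\<^sup>+x. ennreal \<bar>f x\<bar> \<partial>M)\<^sup>2 \<le> (\<integral>\<^sup>+x. ennreal (g x) \<partial>M) * (\<integral>\<^sup>+x. ennreal (h x) \<partial>M)"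
proof -
  have "(\<integral>\<^sup>+x. ennreal \<bar>f x\<bar> \<partial>M) = (\<integral>\<^sup>+x. ennreal (sqrt (g x)) * ennreal (sqrt (h x)) \<partial>M)"
    using factor
  proof (intro nn_integral_cong_AE, elim AE_mp, intro AE_I2 impI)
    fix x assume "(f x)\<^sup>2 = g x * h x"
    then have "\<bar>f x\<bar> = sqrt (g x) * sqrt (h x)" by (metis real_sqrt_abs real_sqrt_mult)
    then show "ennreal \<bar>f x\<bar> = ennreal (sqrt (g x)) * ennreal (sqrt (h x))"
      by (simp add: ennreal_mult nonneg)
  qed
  also have "(\<dots>)\<^sup>2 \<le> (\<integral>\<^sup>+x. ennreal (sqrt (g x)) ^ 2 \<partial>M) * (\<integral>\<^sup>+x. ennreal (sqrt (h x)) ^ 2 \<partial>M)"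
    by (rule Cauchy_Schwarz_nn_integral) auto
  finally show ?thesis by (simp add: ennreal_power nonneg)
qed

text \<open>An integrable nonnegative absolutely continuous function is bounded by the total variation
  \<open>\<integral>|q'|\<close>: it comes arbitrarily close to \<open>0\<close> somewhere to the left of any point.\<close>

lemma density_le_deriv_L1:
  fixes q d :: "real \<Rightarrow> real"
  assumes ac: "ac_deriv q d" and nonneg: "\<And>x. 0 \<le> q x" and int: "integrable lborel q"
  shows "ennreal (q x) \<le> (\<integral>\<^sup>+t. ennreal \<bar>d t\<bar> \<partial>lborel)"
proof (rule ennreal_le_epsilon)
  fix \<epsilon> :: real assume \<epsilon>: "\<epsilon> > 0"
  have "\<exists>y<x. q y < \<epsilon>"
  proof (rule ccontr)
    assume "\<not> ?thesis"
    then have ge: "\<And>y. y < x \<Longrightarrow> \<epsilon> \<le> q y" by force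
    define M where "M = (LINT y|lborel. q y)"
    have M: "M \<ge> 0" unfolding M_def using nonneg by simp
    have "ennreal (M + 1) = (\<integral>\<^sup>+y. ennreal \<epsilon> * indicator {x - (M + 1) / \<epsilon> ..< x} y \<partial>lborel)"
      using \<epsilon> M by (simp add: nn_integral_cmult_indicator ennreal_mult[symmetric])
    also have "\<dots> \<le> (\<integral>\<^sup>+y. ennreal (q y) \<partial>lborel)"
      by (intro nn_integral_mono) (auto simp: indicator_def ge ennreal_leI)
    also have "\<dots> = ennreal M"
      unfolding M_def using int nonneg by (simp add: nn_integral_eq_integral)
    finally show False using M by simp
  qed
  then obtain y where y: "y < x" "q y < \<epsilon>" by blast
  have si: "set_integrable lborel {y..x} d" by (rule ac_deriv_set_integrable[OF ac])
  have "q x - q y = (LINT t:{y..x}|lborel. d t)" using ac y by (simp add: ac_deriv_def)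
  also have "\<dots> \<le> (LINT t:{y..x}|lborel. \<bar>d t\<bar>)"
    using si by (intro set_integral_mono) (auto simp: set_integrable_abs)
  finally have "ennreal (q x - q y) \<le> ennreal (LINT t:{y..x}|lborel. \<bar>d t\<bar>)"
    by (rule ennreal_leI)
  also have "\<dots> = (\<integral>\<^sup>+t. ennreal (indicator {y..x} t * \<bar>d t\<bar>) \<partial>lborel)"
    using set_integrable_abs[OF si]
    by (subst nn_integral_eq_integral) (auto simp: set_integrable_def set_lebesgue_integral_def)
  also have "\<dots> \<le> (\<integral>\<^sup>+t. ennreal \<bar>d t\<bar> \<partial>lborel)"
    by (intro nn_integral_mono) (auto simp: indicator_def)
  finally have increment: "ennreal (q x - q y) \<le> (\<integral>\<^sup>+t. ennreal \<bar>d t\<bar> \<partial>lborel)" .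
  have "ennreal (q x) \<le> ennreal (q x - q y) + ennreal (q y)"
    using nonneg[of y]
    by (cases "q y \<le> q x") (auto simp: ennreal_plus[symmetric] ennreal_neg intro: ennreal_leI)
  also have "\<dots> \<le> (\<integral>\<^sup>+t. ennreal \<bar>d t\<bar> \<partial>lborel) + ennreal \<epsilon>"
    using increment y by (intro add_mono ennreal_leI) auto
  finally show "ennreal (q x) \<le> (\<integral>\<^sup>+t. ennreal \<bar>d t\<bar> \<partial>lborel) + ennreal \<epsilon>" .
qed

text \<open>A probability density with Fisher information at most \<open>I\<close> satisfies \<open>q \<le> \<surd>I\<close>:
  \<open>q(x)\<^sup>2 \<le> (\<integral>|q'|)\<^sup>2 \<le> (\<integral>q'\<^sup>2/q)(\<integral>q) \<le> I\<close>.\<close>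

lemma prob_density_fisher_bound:
  fixes q d :: "real \<Rightarrow> real"
  assumes pd: "prob_density q" and fi: "fisher_info q \<le> ennreal I" and ac: "ac_deriv q d"
  shows "I > 0" and "q x \<le> sqrt I"
proof -
  have nonneg: "\<And>x. 0 \<le> q x" and int: "integrable lborel q" and one: "(LINT x|lborel. q x) = 1"
    using pd by (auto simp: prob_density_def)
  note [measurable] = ac_deriv_measurable[OF ac]
  have sq: "ennreal ((q y)\<^sup>2) \<le> ennreal I" for y
  proof -
    have "ennreal ((q y)\<^sup>2) = (ennreal (q y))\<^sup>2" by (simp add: ennreal_power nonneg)
    also have "\<dots> \<le> (\<integral>\<^sup>+t. ennreal \<bar>d t\<bar> \<partial>lborel)\<^sup>2"
      using density_le_deriv_L1[OF ac nonneg int] by (intro power_mono) auto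
    also have "\<dots> \<le> (\<integral>\<^sup>+t. ennreal (fisher_weight q d t) \<partial>lborel) * (\<integral>\<^sup>+t. ennreal (q t) \<partial>lborel)"
      by (rule nn_integral_abs_Cauchy_Schwarz[OF _ _ fisher_weight_nonneg nonneg
            deriv_sq_eq_weight[OF ac nonneg]]) auto
    also have "\<dots> \<le> ennreal I"
      using fi int nonneg one by (simp add: fisher_info_eq_weight[OF ac, symmetric] nn_integral_eq_integral)
    finally show ?thesis .
  qed
  show "I > 0"
  proof (rule ccontr)
    assume "\<not> I > 0"
    then have "q y = 0" for y using sq[of y] by (simp add: ennreal_neg)
    then show False using one by simp
  qed
  then show "q x \<le> sqrt I"
    using sq[of x] nonneg[of x] by (simp add: real_le_rsqrt)
qed

lemma ennreal_le_of_sq_le: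
  assumes "A\<^sup>2 \<le> (ennreal c)\<^sup>2" "0 \<le> c"
  shows "A \<le> ennreal c"
proof (cases A rule: ennreal_cases)
  case (real a)
  then have "a\<^sup>2 \<le> c\<^sup>2" using assms by (simp add: ennreal_power)
  then have "a \<le> c" using assms(2) by (rule power2_le_imp_le)
  then show ?thesis using real by (simp add: ennreal_leI)
next
  case top
  then show ?thesis using assms by (simp add: ennreal_power top_unique)
qed

lemma ennreal_divide_le_of_le_mult:
  fixes a b :: real
  assumes "ennreal a \<le> ennreal b * B" "b > 0"
  shows "ennreal (a / b) \<le> B"
proof (cases B rule: ennreal_cases)
  case (real c)
  then have "ennreal a \<le> ennreal (b * c)" using assms by (simp add: ennreal_mult)
  then have "a \<le> b * c" using assms(2) real by (simp add: ennreal_le_iff)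
  then have "a / b \<le> c" using assms(2) by (simp add: pos_divide_le_eq mult.commute)
  then show ?thesis using real by (simp add: ennreal_leI)
qed simp

lemma nn_integral_convolution:
  fixes f g :: "real \<Rightarrow> real"
  assumes [measurable]: "f \<in> borel_measurable borel" "g \<in> borel_measurable borel"
    and nonneg: "\<And>x. 0 \<le> f x" "\<And>x. 0 \<le> g x"
  shows "(\<integral>\<^sup>+x. \<integral>\<^sup>+y. ennreal (f y * g (x - y)) \<partial>lborel \<partial>lborel)
       = (\<integral>\<^sup>+y. ennreal (f y) \<partial>lborel) * (\<integral>\<^sup>+x. ennreal (g x) \<partial>lborel)"
proof -
  have "(\<integral>\<^sup>+x. \<integral>\<^sup>+y. ennreal (f y * g (x - y)) \<partial>lborel \<partial>lborel)
      = (\<integral>\<^sup>+y. \<integral>\<^sup>+x. ennreal (f y) * ennreal (g (x - y)) \<partial>lborel \<partial>lborel)"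
    using lborel_pair.Fubini'[of "\<lambda>u v. ennreal (f u * g (v - u))"] by (simp add: ennreal_mult nonneg)
  also have "\<dots> = (\<integral>\<^sup>+y. ennreal (f y) * (\<integral>\<^sup>+x. ennreal (g x) \<partial>lborel) \<partial>lborel)"
  proof (intro nn_integral_cong)
    fix y
    have "(\<integral>\<^sup>+x. ennreal (g (x - y)) \<partial>lborel) = (\<integral>\<^sup>+x. ennreal (g x) \<partial>lborel)"
      using nn_integral_real_affine[of "\<lambda>x. ennreal (g x)" 1 "- y"] by simp
    then show "(\<integral>\<^sup>+x. ennreal (f y) * ennreal (g (x - y)) \<partial>lborel)
        = ennreal (f y) * (\<integral>\<^sup>+x. ennreal (g x) \<partial>lborel)"
      by (simp add: nn_integral_cmult)
  qed
  finally show ?thesis by (simp add: nn_integral_multc)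
qed

context
  fixes p1 p2 d1 d2 :: "real \<Rightarrow> real" and I :: real
  assumes pd1: "prob_density p1" and pd2: "prob_density p2"
    and fi1: "fisher_info p1 \<le> ennreal I" and fi2: "fisher_info p2 \<le> ennreal I"
    and ac1: "ac_deriv p1 d1" and ac2: "ac_deriv p2 d2"
begin

lemma densities_measurable[measurable]:
  "p1 \<in> borel_measurable borel" "p2 \<in> borel_measurable borel"
  "d1 \<in> borel_measurable borel" "d2 \<in> borel_measurable borel"
  using ac_deriv_measurable[OF ac1] ac_deriv_measurable[OF ac2] by auto

lemma densities_nonneg: "0 \<le> p1 y" "0 \<le> p2 y"
  using pd1 pd2 by (auto simp: prob_density_def)

lemma fisher_weight_integrals:
  "(\<integral>\<^sup>+y. ennreal (fisher_weight p1 d1 y) \<partial>lborel) \<le> ennreal I"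
  "(\<integral>\<^sup>+y. ennreal (fisher_weight p2 d2 (x - y)) \<partial>lborel) \<le> ennreal I"
  using fi1 fi2 nn_integral_real_affine[of "\<lambda>y. ennreal (fisher_weight p2 d2 y)" "-1" x]
  by (simp_all add: fisher_info_eq_weight[OF ac1] fisher_info_eq_weight[OF ac2])

text \<open>Pointwise, \<open>(d\<^sub>1(y) d\<^sub>2(x-y))\<^sup>2 = w\<^sub>1(y) p\<^sub>2(x-y) \<cdot> p\<^sub>1(y) w\<^sub>2(x-y)\<close> for almost every \<open>y\<close>;
  both regroupings of this product feed the Cauchy--Schwarz inequality below.\<close>

lemma conv_deriv_factor:
  "AE y in lborel. (d1 y * d2 (x - y))\<^sup>2
     = (fisher_weight p1 d1 y * p2 (x - y)) * (p1 y * fisher_weight p2 d2 (x - y))"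
proof -
  have "AE y in lborel. (d2 (x - y))\<^sup>2 = fisher_weight p2 d2 (x - y) * p2 (x - y)"
    using AE_borel_affine[of "-1" _ x, OF _ _ deriv_sq_eq_weight[OF ac2 densities_nonneg(2)]] by simp
  with deriv_sq_eq_weight[OF ac1 densities_nonneg(1)] show ?thesis
    by eventually_elim (simp add: power_mult_distrib)
qed

text \<open>\<open>\<integral>|d\<^sub>1(y) d\<^sub>2(x-y)| dy \<le> (\<integral> w\<^sub>1 \<cdot> sup p\<^sub>2)\<^sup>1\<^sup>/\<^sup>2 (\<integral> w\<^sub>2 \<cdot> sup p\<^sub>1)\<^sup>1\<^sup>/\<^sup>2 \<le> I \<surd>I\<close>.\<close>

lemma conv_abs_deriv_le:
  "(\<integral>\<^sup>+y. ennreal \<bar>d1 y * d2 (x - y)\<bar> \<partial>lborel) \<le> ennreal (I powr (3/2))"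
proof -
  have I: "I > 0" by (rule prob_density_fisher_bound(1)[OF pd1 fi1 ac1])
  have bound: "p1 y \<le> sqrt I" "p2 y \<le> sqrt I" for y
    by (rule prob_density_fisher_bound(2)[OF pd1 fi1 ac1], rule prob_density_fisher_bound(2)[OF pd2 fi2 ac2])
  have "(\<integral>\<^sup>+y. ennreal (fisher_weight p1 d1 y * p2 (x - y)) \<partial>lborel)
      \<le> (\<integral>\<^sup>+y. ennreal (fisher_weight p1 d1 y) * ennreal (sqrt I) \<partial>lborel)"
    using I by (intro nn_integral_mono, subst ennreal_mult[symmetric])
      (auto intro!: ennreal_leI mult_left_mono bound simp: fisher_weight_nonneg)
  also have "\<dots> \<le> ennreal I * ennreal (sqrt I)"
    using fisher_weight_integrals(1) by (simp add: nn_integral_multc mult_right_mono)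
  finally have A: "(\<integral>\<^sup>+y. ennreal (fisher_weight p1 d1 y * p2 (x - y)) \<partial>lborel) \<le> ennreal (I * sqrt I)"
    using I by (simp add: ennreal_mult)
  have "(\<integral>\<^sup>+y. ennreal (p1 y * fisher_weight p2 d2 (x - y)) \<partial>lborel)
      \<le> (\<integral>\<^sup>+y. ennreal (fisher_weight p2 d2 (x - y)) * ennreal (sqrt I) \<partial>lborel)"
    using I by (intro nn_integral_mono, subst ennreal_mult[symmetric])
      (auto intro!: ennreal_leI mult_right_mono bound simp: fisher_weight_nonneg mult.commute)
  also have "\<dots> \<le> ennreal I * ennreal (sqrt I)"
    using fisher_weight_integrals(2)[of x] by (simp add: nn_integral_multc mult_right_mono)
  finally have B: "(\<integral>\<^sup>+y. ennreal (p1 y * fisher_weight p2 d2 (x - y)) \<partial>lborel) \<le> ennreal (I * sqrt I)"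
    using I by (simp add: ennreal_mult)
  have "(\<integral>\<^sup>+y. ennreal \<bar>d1 y * d2 (x - y)\<bar> \<partial>lborel)\<^sup>2
      \<le> (\<integral>\<^sup>+y. ennreal (fisher_weight p1 d1 y * p2 (x - y)) \<partial>lborel)
        * (\<integral>\<^sup>+y. ennreal (p1 y * fisher_weight p2 d2 (x - y)) \<partial>lborel)"
    by (rule nn_integral_abs_Cauchy_Schwarz[OF _ _ _ _ conv_deriv_factor])
      (auto simp: fisher_weight_nonneg densities_nonneg)
  also have "\<dots> \<le> (ennreal (I * sqrt I))\<^sup>2"
    using A B by (simp add: power2_eq_square mult_mono)
  also have "I * sqrt I = I powr 1 * I powr (1/2)"
    using I by (simp add: powr_half_sqrt)
  also have "\<dots> = I powr (3/2)"
    by (subst powr_add[symmetric]) simp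
  finally show ?thesis by (rule ennreal_le_of_sq_le) simp
qed

lemma conv_deriv_integrable: "integrable lborel (\<lambda>y. d1 y * d2 (x - y))"
  using conv_abs_deriv_le[of x] by (intro integrableI_bounded) (auto simp: le_less_trans)

lemma conv_deriv_bound: "\<bar>conv d1 d2 x\<bar> \<le> I powr (3/2)"
proof -
  have "ennreal \<bar>conv d1 d2 x\<bar> \<le> ennreal (I powr (3/2))"
    using order_trans[OF integral_norm_bound_ennreal[OF conv_deriv_integrable[of x], unfolded real_norm_def]
          conv_abs_deriv_le[of x]]
    by (simp add: conv_def)
  then show ?thesis by simp
qed

lemma conv_density_integrable: "integrable lborel (\<lambda>y. p1 y * p2 (x - y))"
proof (rule Bochner_Integration.integrable_bound)
  show "integrable lborel (\<lambda>y. sqrt I * p1 y)" using pd1 by (simp add: prob_density_def)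
  show "AE y in lborel. norm (p1 y * p2 (x - y)) \<le> norm (sqrt I * p1 y)"
  proof (intro AE_I2)
    fix y
    have "p1 y * p2 (x - y) \<le> p1 y * sqrt I"
      using prob_density_fisher_bound(2)[OF pd2 fi2 ac2] densities_nonneg(1) by (rule mult_left_mono)
    then show "norm (p1 y * p2 (x - y)) \<le> norm (sqrt I * p1 y)"
      using densities_nonneg[of y] densities_nonneg(2)[of "x - y"] prob_density_fisher_bound(1)[OF pd2 fi2 ac2]
      by (simp add: abs_mult mult.commute)
  qed
qed measurable

text \<open>Where the convolution \<open>p\<^sub>1 * p\<^sub>2\<close> vanishes, \<open>p\<^sub>1(y) p\<^sub>2(x-y) = 0\<close> for almost every \<open>y\<close>,
  hence so does \<open>d\<^sub>1(y) d\<^sub>2(x-y)\<close> by the factorisation above.\<close>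

lemma conv_deriv_vanishes:
  assumes "conv p1 p2 x = 0"
  shows "conv d1 d2 x = 0"
proof -
  have "AE y in lborel. p1 y * p2 (x - y) = 0"
    using assms conv_density_integrable[of x] densities_nonneg
    by (subst integral_nonneg_eq_0_iff_AE[symmetric]) (auto simp: conv_def)
  with conv_deriv_factor[of x] have "AE y in lborel. d1 y * d2 (x - y) = 0"
  proof eventually_elim
    case (elim y)
    then have "(d1 y * d2 (x - y))\<^sup>2
        = (p1 y * p2 (x - y)) * (fisher_weight p1 d1 y * fisher_weight p2 d2 (x - y))"
      by (simp add: mult_ac)
    then show ?case using elim(2) by simp
  qed
  then show ?thesis unfolding conv_def by (rule integral_eq_zero_AE)
qed

text \<open>Cauchy--Schwarz with the other grouping:
  \<open>(p\<^sub>1' * p\<^sub>2')(x)\<^sup>2 \<le> (p\<^sub>1 * p\<^sub>2)(x) \<cdot> (w\<^sub>1 * w\<^sub>2)(x)\<close>.\<close>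

lemma conv_deriv_sq_le:
  "ennreal ((conv d1 d2 x)\<^sup>2)
     \<le> ennreal (conv p1 p2 x) * (\<integral>\<^sup>+y. ennreal (fisher_weight p1 d1 y * fisher_weight p2 d2 (x - y)) \<partial>lborel)"
proof -
  have "ennreal ((conv d1 d2 x)\<^sup>2) = (ennreal \<bar>conv d1 d2 x\<bar>)\<^sup>2"
    by (simp add: ennreal_power)
  also have "\<dots> \<le> (\<integral>\<^sup>+y. ennreal \<bar>d1 y * d2 (x - y)\<bar> \<partial>lborel)\<^sup>2"
    using integral_norm_bound_ennreal[OF conv_deriv_integrable[of x]]
    by (intro power_mono) (auto simp: conv_def)
  also have "\<dots> \<le> (\<integral>\<^sup>+y. ennreal (p1 y * p2 (x - y)) \<partial>lborel)
      * (\<integral>\<^sup>+y. ennreal (fisher_weight p1 d1 y * fisher_weight p2 d2 (x - y)) \<partial>lborel)"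
    using conv_deriv_factor[of x]
    by (intro nn_integral_abs_Cauchy_Schwarz) (auto simp: fisher_weight_nonneg densities_nonneg mult_ac)
  also have "(\<integral>\<^sup>+y. ennreal (p1 y * p2 (x - y)) \<partial>lborel) = ennreal (conv p1 p2 x)"
    unfolding conv_def using conv_density_integrable[of x] densities_nonneg
    by (subst nn_integral_eq_integral) auto
  finally show ?thesis .
qed

text \<open>Integrating the previous bound over \<open>{p\<^sub>1 * p\<^sub>2 > 0}\<close> gives the Fisher information bound
  \<open>I(p\<^sub>1 * p\<^sub>2) \<le> (\<integral>w\<^sub>1)(\<integral>w\<^sub>2) \<le> I\<^sup>2\<close>.\<close>

lemma conv_fisher_info_le:
  "(\<integral>\<^sup>+ x. indicator {y. conv p1 p2 y > 0} x
      * ennreal ((conv d1 d2 x)\<^sup>2 / conv p1 p2 x) \<partial>lborel) \<le> ennreal (I\<^sup>2)"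
proof -
  have "(\<integral>\<^sup>+ x. indicator {y. conv p1 p2 y > 0} x
          * ennreal ((conv d1 d2 x)\<^sup>2 / conv p1 p2 x) \<partial>lborel)
      \<le> (\<integral>\<^sup>+x. \<integral>\<^sup>+y. ennreal (fisher_weight p1 d1 y * fisher_weight p2 d2 (x - y)) \<partial>lborel \<partial>lborel)"
  proof (intro nn_integral_mono)
    fix x
    show "indicator {y. conv p1 p2 y > 0} x * ennreal ((conv d1 d2 x)\<^sup>2 / conv p1 p2 x)
        \<le> (\<integral>\<^sup>+y. ennreal (fisher_weight p1 d1 y * fisher_weight p2 d2 (x - y)) \<partial>lborel)"
      using ennreal_divide_le_of_le_mult[OF conv_deriv_sq_le] by (simp add: indicator_def)
  qed
  also have "\<dots> = (\<integral>\<^sup>+y. ennreal (fisher_weight p1 d1 y) \<partial>lborel)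
      * (\<integral>\<^sup>+x. ennreal (fisher_weight p2 d2 x) \<partial>lborel)"
    by (rule nn_integral_convolution) (auto simp: fisher_weight_nonneg)
  also have "\<dots> \<le> ennreal I * ennreal I"
    using fi1 fi2 by (intro mult_mono) (simp_all add: fisher_info_eq_weight[OF ac1] fisher_info_eq_weight[OF ac2])
  also have "\<dots> = ennreal (I\<^sup>2)"
    using prob_density_fisher_bound(1)[OF pd1 fi1 ac1]
    by (simp add: ennreal_mult[symmetric] power2_eq_square)
  finally show ?thesis .
qed

end

theorem proposition6p3:
  fixes p1 p2 d1 d2 :: "real \<Rightarrow> real" and I :: real
  assumes "prob_density p1" and "prob_density p2"
    and "fisher_info p1 \<le> ennreal I" and "fisher_info p2 \<le> ennreal I"
    and "ac_deriv p1 d1" and "ac_deriv p2 d2"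
  shows "(\<forall>x. integrable lborel (\<lambda>y. d1 y * d2 (x - y)))
    \<and> (\<forall>x. conv p1 p2 x = 0 \<longrightarrow> conv d1 d2 x = 0)
    \<and> (\<forall>x. \<bar>conv d1 d2 x\<bar> \<le> I powr (3/2))
    \<and> (\<integral>\<^sup>+ x. indicator {y. conv p1 p2 y > 0} x
            * ennreal ((conv d1 d2 x)\<^sup>2 / conv p1 p2 x) \<partial>lborel) \<le> ennreal (I\<^sup>2)"
  using conv_deriv_integrable[OF assms] conv_deriv_vanishes[OF assms]
    conv_deriv_bound[OF assms] conv_fisher_info_le[OF assms]
  by blast

end
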